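(* Let $(a_1,\dots,a_6)$ be a minimal tetrahedral curve, with ideal $I$, such that $$a_1>\max\{a_3+a_5+2,\ a_2+a_4+2\}\quad\text{and}\quad a_6>\max\{a_4+a_5+2,\ a_2+a_3+2\}.$$ Then there is no non-minimal tetrahedral curve that reduces to $I$ by a finite sequence of reductions of types (A), (B), (C), (D).
   Context: Let $k$ be a field, $R=k[a,b,c,d]$. The tetrahedral curve $(a_1,\dots,a_6)$ has ideal $(a,b)^{a_1}\cap(a,c)^{a_2}\cap(a,d)^{a_3}\cap(b,c)^{a_4}\cap(b,d)^{a_5}\cap(c,d)^{a_6}$. With $a_i'=\max\{0,a_i-1\}$, the reductions are: (A) if $a_1+a_2\ge a_4$, $a_1+a_3\ge a_5$, $a_2+a_3\ge a_6$, the curve reduces to $(a_1',a_2',a_3',a_4,a_5,a_6)$ (and its ideal is $a\cdot I'+(b^{a_1}c^{a_2}d^{a_3})$, $I'$ the new ideal); (B) if $a_1+a_4\ge a_2$, $a_1+a_5\ge a_3$, $a_4+a_5\ge a_6$, to $(a_1',a_2,a_3,a_4',a_5',a_6)$; (C) if $a_2+a_4\ge a_1$, $a_2+a_6\ge a_3$, $a_4+a_6\ge a_5$, to $(a_1,a_2',a_3,a_4',a_5,a_6')$; (D) if $a_3+a_5\ge a_1$, $a_3+a_6\ge a_2$, $a_5+a_6\ge a_4$, to $(a_1,a_2,a_3',a_4,a_5',a_6')$. A non-arithmetically Cohen–Macaulay tetrahedral curve is minimal if none of (A)–(D) applies. These reductions are basic double links and preserve the even liaison class. *)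

theory Defs
  imports Main
begin

text \<open>A tetrahedral curve (a1,...,a6) with ideal
  (a,b)^a1 \<inter> (a,c)^a2 \<inter> (a,d)^a3 \<inter> (b,c)^a4 \<inter> (b,d)^a5 \<inter> (c,d)^a6 in k[a,b,c,d].
  The ideal is determined by the tuple and conversely (primary decomposition),
  so curves are represented by their 6-tuples of exponents.\<close>

datatype tcurve = TC nat nat nat nat nat nat

text \<open>a' = max 0 (a - 1); on nat this is truncated subtraction a - 1.\<close>
definition dec :: "nat \<Rightarrow> nat" where "dec x = x - 1"

definition condA :: "tcurve \<Rightarrow> bool" where
  "condA C = (case C of TC a1 a2 a3 a4 a5 a6 \<Rightarrow>
     a1 + a2 \<ge> a4 \<and> a1 + a3 \<ge> a5 \<and> a2 + a3 \<ge> a6)"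
definition condB :: "tcurve \<Rightarrow> bool" where
  "condB C = (case C of TC a1 a2 a3 a4 a5 a6 \<Rightarrow>
     a1 + a4 \<ge> a2 \<and> a1 + a5 \<ge> a3 \<and> a4 + a5 \<ge> a6)"
definition condC :: "tcurve \<Rightarrow> bool" where
  "condC C = (case C of TC a1 a2 a3 a4 a5 a6 \<Rightarrow>
     a2 + a4 \<ge> a1 \<and> a2 + a6 \<ge> a3 \<and> a4 + a6 \<ge> a5)"
definition condD :: "tcurve \<Rightarrow> bool" where
  "condD C = (case C of TC a1 a2 a3 a4 a5 a6 \<Rightarrow>
     a3 + a5 \<ge> a1 \<and> a3 + a6 \<ge> a2 \<and> a5 + a6 \<ge> a4)"

definition redA :: "tcurve \<Rightarrow> tcurve" where
  "redA C = (case C of TC a1 a2 a3 a4 a5 a6 \<Rightarrow> TC (dec a1) (dec a2) (dec a3) a4 a5 a6)"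
definition redB :: "tcurve \<Rightarrow> tcurve" where
  "redB C = (case C of TC a1 a2 a3 a4 a5 a6 \<Rightarrow> TC (dec a1) a2 a3 (dec a4) (dec a5) a6)"
definition redC :: "tcurve \<Rightarrow> tcurve" where
  "redC C = (case C of TC a1 a2 a3 a4 a5 a6 \<Rightarrow> TC a1 (dec a2) a3 (dec a4) a5 (dec a6))"
definition redD :: "tcurve \<Rightarrow> tcurve" where
  "redD C = (case C of TC a1 a2 a3 a4 a5 a6 \<Rightarrow> TC a1 a2 (dec a3) a4 (dec a5) (dec a6))"

definition reduces_step :: "tcurve \<Rightarrow> tcurve \<Rightarrow> bool" where
  "reduces_step C D =
     ((condA C \<and> D = redA C) \<or> (condB C \<and> D = redB C) \<or>
      (condC C \<and> D = redC C) \<or> (condD C \<and> D = redD C))"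

definition reducible :: "tcurve \<Rightarrow> bool" where
  "reducible C = (condA C \<or> condB C \<or> condC C \<or> condD C)"

definition minimal_tc :: "tcurve \<Rightarrow> bool" where
  "minimal_tc C = (\<not> reducible C)"

end

theory Submission
  imports Defs
begin

text \<open>Each reduction lowers certain entries by at most one, and its applicability condition
  bounds a sum of two of those entries from below by a third, unchanged entry.  Hence the
  image of a reduction satisfies one of four inequalities, all of which the hypotheses
  violate: the curve has no predecessor, so a reduction chain ending in it is trivial and
  starts at the minimal curve itself.\<close>

lemma le_Suc_dec: "b \<le> Suc (dec b)"
  unfolding dec_def by simp

lemma redA_image_bound:
  assumes "condA D" and "redA D = TC a1 a2 a3 a4 a5 a6"
  shows "a6 \<le> a2 + a3 + 2"
proof (cases D)
  case (TC b1 b2 b3 b4 b5 b6)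
  with assms have "b2 + b3 \<ge> a6" "dec b2 = a2" "dec b3 = a3"
    by (simp_all add: condA_def redA_def)
  then show ?thesis using le_Suc_dec[of b2] le_Suc_dec[of b3] by linarith
qed

lemma redB_image_bound:
  assumes "condB D" and "redB D = TC a1 a2 a3 a4 a5 a6"
  shows "a6 \<le> a4 + a5 + 2"
proof (cases D)
  case (TC b1 b2 b3 b4 b5 b6)
  with assms have "b4 + b5 \<ge> a6" "dec b4 = a4" "dec b5 = a5"
    by (simp_all add: condB_def redB_def)
  then show ?thesis using le_Suc_dec[of b4] le_Suc_dec[of b5] by linarith
qed

lemma redC_image_bound:
  assumes "condC D" and "redC D = TC a1 a2 a3 a4 a5 a6"
  shows "a1 \<le> a2 + a4 + 2"
proof (cases D)
  case (TC b1 b2 b3 b4 b5 b6)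
  with assms have "b2 + b4 \<ge> a1" "dec b2 = a2" "dec b4 = a4"
    by (simp_all add: condC_def redC_def)
  then show ?thesis using le_Suc_dec[of b2] le_Suc_dec[of b4] by linarith
qed

lemma redD_image_bound:
  assumes "condD D" and "redD D = TC a1 a2 a3 a4 a5 a6"
  shows "a1 \<le> a3 + a5 + 2"
proof (cases D)
  case (TC b1 b2 b3 b4 b5 b6)
  with assms have "b3 + b5 \<ge> a1" "dec b3 = a3" "dec b5 = a5"
    by (simp_all add: condD_def redD_def)
  then show ?thesis using le_Suc_dec[of b3] le_Suc_dec[of b5] by linarith
qed

lemma reduces_step_image_bounds:
  assumes "reduces_step D (TC a1 a2 a3 a4 a5 a6)"
  shows "a6 \<le> a2 + a3 + 2 \<or> a6 \<le> a4 + a5 + 2 \<or> a1 \<le> a2 + a4 + 2 \<or> a1 \<le> a3 + a5 + 2"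
  using assms redA_image_bound redB_image_bound redC_image_bound redD_image_bound
  unfolding reduces_step_def by metis

theorem proposition6p2:
  fixes a1 a2 a3 a4 a5 a6 :: nat
  assumes "minimal_tc (TC a1 a2 a3 a4 a5 a6)"
    and "a1 > max (a3 + a5 + 2) (a2 + a4 + 2)"
    and "a6 > max (a4 + a5 + 2) (a2 + a3 + 2)"
  shows "\<not> (\<exists>C. \<not> minimal_tc C \<and> reduces_step\<^sup>*\<^sup>* C (TC a1 a2 a3 a4 a5 a6))"
proof
  assume "\<exists>C. \<not> minimal_tc C \<and> reduces_step\<^sup>*\<^sup>* C (TC a1 a2 a3 a4 a5 a6)"
  then obtain C where non_minimal: "\<not> minimal_tc C"
    and chain: "reduces_step\<^sup>*\<^sup>* C (TC a1 a2 a3 a4 a5 a6)"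
    by blast
  have no_predecessor: "\<not> reduces_step D (TC a1 a2 a3 a4 a5 a6)" for D
    using reduces_step_image_bounds assms(2,3) by fastforce
  from chain have "C = TC a1 a2 a3 a4 a5 a6"
    by (cases rule: rtranclp.cases) (auto simp: no_predecessor)
  with non_minimal assms(1) show False by simp
qed

end
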